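(* Let $\varphi$ and $\omega$ be Schwarz-type functions and $F=\ell\circ\omega$. Suppose that at some point $\zeta$ of the unit circle, $\varphi$ has a radial limit of modulus one. If $T_{F,\varphi}(f)\in\mathcal{P}$ for every $f\in\mathcal{P}$, then $\omega$ does not have a finite non-zero angular derivative at $\zeta$.
   Context: $\mathbb{D}$ is the open unit disk. $\mathcal{P}$ is the set of analytic $f$ on $\mathbb{D}$ with $\mathrm{Re}\,f>0$ and $f(0)=1$. A Schwarz-type function is an analytic $\varphi:\mathbb{D}\to\mathbb{D}$ with $\varphi(0)=0$. $\ell(z)=\frac{1+z}{1-z}$. $T_{F,\varphi}(f)=F\cdot(f\circ\varphi)$. An analytic self-map $\omega$ of $\mathbb{D}$ has an angular derivative at $\zeta$ (in the sense of Carathéodory) if its nontangential limit at $\zeta$ has modulus one and $\omega'(z)$ has a finite nontangential limit as $z\to\zeta$. *)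

theory Defs
  imports "HOL-Complex_Analysis.Complex_Analysis"
begin

definition unit_disk :: "complex set" where
  "unit_disk = ball 0 1"

definition class_P :: "(complex \<Rightarrow> complex) set" where
  "class_P = {f. f holomorphic_on unit_disk \<and> (\<forall>z\<in>unit_disk. Re (f z) > 0) \<and> f 0 = 1}"

definition schwarz_type :: "(complex \<Rightarrow> complex) \<Rightarrow> bool" where
  "schwarz_type \<phi> \<longleftrightarrow> \<phi> holomorphic_on unit_disk \<and> \<phi> ` unit_disk \<subseteq> unit_disk \<and> \<phi> 0 = 0"

definition ell :: "complex \<Rightarrow> complex" where
  "ell z = (1 + z) / (1 - z)"

definition T_op :: "(complex \<Rightarrow> complex) \<Rightarrow> (complex \<Rightarrow> complex) \<Rightarrow> (complex \<Rightarrow> complex) \<Rightarrow> (complex \<Rightarrow> complex)" where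
  "T_op F \<phi> f = (\<lambda>z. F z * f (\<phi> z))"

definition stolz_angle :: "complex \<Rightarrow> real \<Rightarrow> complex set" where
  "stolz_angle \<zeta> M = {z \<in> unit_disk. cmod (\<zeta> - z) < M * (1 - cmod z)}"

definition nontangential_limit :: "(complex \<Rightarrow> complex) \<Rightarrow> complex \<Rightarrow> complex \<Rightarrow> bool" where
  "nontangential_limit f \<zeta> L \<longleftrightarrow> (\<forall>M>1. (f \<longlongrightarrow> L) (at \<zeta> within stolz_angle \<zeta> M))"

definition radial_limit :: "(complex \<Rightarrow> complex) \<Rightarrow> complex \<Rightarrow> complex \<Rightarrow> bool" where
  "radial_limit f \<zeta> L \<longleftrightarrow> ((\<lambda>r::real. f (complex_of_real r * \<zeta>)) \<longlongrightarrow> L) (at_left 1)"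

definition has_angular_derivative :: "(complex \<Rightarrow> complex) \<Rightarrow> complex \<Rightarrow> complex \<Rightarrow> bool" where
  "has_angular_derivative \<omega> \<zeta> D \<longleftrightarrow>
     (\<exists>\<eta>. cmod \<eta> = 1 \<and> nontangential_limit \<omega> \<zeta> \<eta>) \<and> nontangential_limit (deriv \<omega>) \<zeta> D"

end

theory Submission
  imports Defs
begin

text \<open>
  Testing \<open>T_op (ell \<circ> \<omega>) \<phi>\<close> on the rotated Cayley maps \<open>w \<mapsto> ell (c w)\<close>, \<open>|c| = 1\<close>, shows
  \<open>4 |Im \<omega>| |\<phi>| \<le> (1 - |\<omega>|\<^sup>2) (1 - |\<phi>|\<^sup>2)\<close> throughout the disk. If \<open>\<omega>\<close> had a finite non-zero
  angular derivative at \<open>\<zeta>\<close>, then along a suitable segment \<open>\<zeta> (1 - s (1 \<plusminus> i))\<close> entering the disk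
  at \<open>45\<degree>\<close> we would have \<open>1 - |\<omega>|\<^sup>2 \<le> 4 |Im \<omega>|\<close>, hence \<open>|\<phi>| \<le> 1 - |\<phi>|\<^sup>2\<close>, i.e. \<open>|\<phi>| \<le> 2/3\<close>
  there. These points stay within pseudo-hyperbolic distance \<open>4/7\<close> of the radial points \<open>(1 - s) \<zeta>\<close>,
  so by Schwarz--Pick \<open>|\<phi>|\<close> stays bounded away from \<open>1\<close> along the radius, contradicting the
  radial limit of modulus one.
\<close>

lemma Schwarz_Pick_Moebius_function:
  assumes holf: "f holomorphic_on ball 0 1" and img: "f ` ball 0 1 \<subseteq> ball 0 1"
    and z: "norm z < 1" and w: "norm w < 1"
  shows "norm (Moebius_function 0 (f w) (f z)) \<le> norm (Moebius_function 0 w z)"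
proof -
  have fw: "norm (f w) < 1" using img w by (simp add: image_subset_iff)
  define g where "g = Moebius_function 0 (f w) \<circ> f \<circ> Moebius_function 0 (-w)"
  have mimg: "Moebius_function 0 (-w) ` ball 0 1 \<subseteq> ball 0 1"
    using Moebius_function_norm_lt_1 w by auto
  have h1: "(f \<circ> Moebius_function 0 (-w)) holomorphic_on ball 0 1"
    by (rule holomorphic_on_compose_gen[OF Moebius_function_holomorphic holf mimg]) (use w in auto)
  have i1: "(f \<circ> Moebius_function 0 (-w)) ` ball 0 1 \<subseteq> ball 0 1"
    using mimg img unfolding image_comp[symmetric] by (meson image_mono order_trans)
  have hol: "g holomorphic_on ball 0 1"
    unfolding g_def o_assoc[symmetric]
    by (rule holomorphic_on_compose_gen[OF h1 Moebius_function_holomorphic[OF fw] i1])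
  have g0: "g 0 = 0"
    by (simp add: g_def Moebius_function_of_zero Moebius_function_eq_zero)
  have gn: "norm (g u) < 1" if "norm u < 1" for u
  proof -
    have "norm (Moebius_function 0 (-w) u) < 1" using Moebius_function_norm_lt_1 w that by simp
    then have "norm (f (Moebius_function 0 (-w) u)) < 1" using img by (simp add: image_subset_iff)
    then show ?thesis unfolding g_def using Moebius_function_norm_lt_1 fw by simp
  qed
  have v: "norm (Moebius_function 0 w z) < 1" using Moebius_function_norm_lt_1 w z by simp
  have "norm (g (Moebius_function 0 w z)) \<le> norm (Moebius_function 0 w z)"
    using Schwarz_Lemma(1)[OF hol g0 gn v] by simp
  moreover have "Moebius_function 0 (-w) (Moebius_function 0 w z) = z"
    using Moebius_function_compose[of "-w" w z] w z by simp
  ultimately show ?thesis by (simp add: g_def)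
qed

lemma norm_Moebius_identity:
  fixes a b :: complex
  shows "(cmod (1 - cnj b * a))^2 - (cmod (a - b))^2 = (1 - (cmod a)^2) * (1 - (cmod b)^2)"
proof -
  have "(cmod (1 - cnj b * a))^2 = (1 - (Re b * Re a + Im b * Im a))^2 + (Re b * Im a - Im b * Re a)^2"
    unfolding cmod_power2 by (simp add: power2_eq_square algebra_simps)
  moreover have "(cmod (a - b))^2 = (Re a - Re b)^2 + (Im a - Im b)^2"
    unfolding cmod_power2 by simp
  ultimately show ?thesis unfolding cmod_power2 by (simp add: power2_eq_square algebra_simps)
qed

lemma Moebius_function_le_imp_norm_bound:
  fixes a b :: complex and r \<rho> :: real
  assumes a: "cmod a \<le> r" and r: "r < 1" and b: "cmod b < 1"
    and m: "cmod (Moebius_function 0 b a) \<le> \<rho>"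
  shows "(1 - \<rho>^2) * (1 - r)^2 \<le> 1 - (cmod b)^2"
proof -
  have "cmod (cnj b * a) \<le> r"
    using a b by (simp add: norm_mult) (smt (verit) mult_left_le_one_le norm_ge_zero)
  then have lb: "1 - r \<le> cmod (1 - cnj b * a)"
    using norm_triangle_ineq2[of 1 "cnj b * a"] by simp
  then have "cnj b * a \<noteq> 1" using r by auto
  then have "cmod (a - b) \<le> \<rho> * cmod (1 - cnj b * a)"
    using m by (simp add: Moebius_function_simple norm_divide divide_le_eq)
  then have "(cmod (a - b))^2 \<le> \<rho>^2 * (cmod (1 - cnj b * a))^2"
    by (metis norm_ge_zero power_mono power_mult_distrib)
  then have "(1 - \<rho>^2) * (cmod (1 - cnj b * a))^2 \<le> (1 - (cmod a)^2) * (1 - (cmod b)^2)"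
    using norm_Moebius_identity[where a=a and b=b] by (simp add: left_diff_distrib)
  moreover have "(1 - \<rho>^2) * (1 - r)^2 \<le> max 0 ((1 - \<rho>^2) * (cmod (1 - cnj b * a))^2)"
  proof (cases "\<rho>^2 \<le> 1")
    case True
    have "(1 - r)^2 \<le> (cmod (1 - cnj b * a))^2" using lb r by (intro power_mono) auto
    then show ?thesis using True by (simp add: mult_left_mono)
  next
    case False
    then show ?thesis by (simp add: mult_nonpos_nonneg)
  qed
  moreover have "0 \<le> (1 - (cmod a)^2) * (1 - (cmod b)^2)"
    using a r b by (intro mult_nonneg_nonneg) (simp_all add: abs_square_le_1)
  moreover have "(1 - (cmod a)^2) * (1 - (cmod b)^2) \<le> 1 - (cmod b)^2"
    using a r b by (intro mult_left_le_one_le) (auto simp: abs_square_le_1)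
  ultimately show ?thesis by linarith
qed

lemma ell_eq_Complex:
  assumes "a \<noteq> 1"
  shows "ell a = Complex (1 - (cmod a)^2) (2 * Im a) / complex_of_real ((cmod (1 - a))^2)"
proof -
  have "(1 + a) * cnj (1 - a) = Complex (1 - (cmod a)^2) (2 * Im a)"
    using cmod_power2[of a] by (simp add: complex_eq_iff algebra_simps power2_eq_square)
  moreover have "(1 - a) * cnj (1 - a) = complex_of_real ((cmod (1 - a))^2)"
    by (metis complex_norm_square of_real_power)
  moreover have "cnj (1 - a) \<noteq> 0" using assms by simp
  ultimately show ?thesis unfolding ell_def
    by (metis mult_divide_mult_cancel_right)
qed

lemma Re_ell_pos:
  assumes "cmod u < 1"
  shows "Re (ell u) > 0"
proof -
  have "u \<noteq> 1" using assms by auto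
  then have "Re (ell u) = (1 - (cmod u)^2) / (cmod (1 - u))^2"
    by (simp add: ell_eq_Complex Re_divide_of_real del: of_real_power)
  then show ?thesis using assms \<open>u \<noteq> 1\<close> by (simp add: abs_square_less_1)
qed

lemma Re_ell_mult:
  assumes "a \<noteq> 1" "u \<noteq> 1"
  shows "Re (ell a * ell u) = ((1 - (cmod a)^2) * (1 - (cmod u)^2) - 4 * Im a * Im u)
            / ((cmod (1 - a))^2 * (cmod (1 - u))^2)"
  using ell_eq_Complex[OF assms(1)] ell_eq_Complex[OF assms(2)]
  by (simp add: Re_divide_of_real algebra_simps)

lemma ell_rotation_in_class_P:
  assumes "cmod c = 1"
  shows "(\<lambda>w. ell (c * w)) \<in> class_P"
proof -
  have small: "cmod (c * w) < 1" if "w \<in> unit_disk" for w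
    using that assms by (simp add: unit_disk_def norm_mult)
  then have "1 - c * w \<noteq> 0" if "w \<in> unit_disk" for w
    using that by fastforce
  then have "(\<lambda>w. ell (c * w)) holomorphic_on unit_disk"
    unfolding ell_def by (intro holomorphic_intros) auto
  then show ?thesis
    using small Re_ell_pos by (simp add: class_P_def ell_def)
qed

lemma class_P_preserving_imp_Im_bound:
  assumes T: "\<forall>f\<in>class_P. T_op (ell \<circ> \<omega>) \<phi> f \<in> class_P"
    and z: "z \<in> unit_disk" and p: "cmod (\<phi> z) < 1" and a: "cmod (\<omega> z) < 1"
  shows "4 * \<bar>Im (\<omega> z)\<bar> * cmod (\<phi> z) \<le> (1 - (cmod (\<omega> z))^2) * (1 - (cmod (\<phi> z))^2)"
proof (cases "\<phi> z = 0")
  case True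
  then show ?thesis using a by (simp add: abs_square_le_1)
next
  case False
  define \<sigma> :: real where "\<sigma> = (if Im (\<omega> z) \<ge> 0 then 1 else -1)"
  define c where "c = \<i> * \<sigma> * cnj (\<phi> z) / cmod (\<phi> z)"
  have c1: "cmod c = 1" using False by (simp add: c_def norm_mult norm_divide \<sigma>_def)
  have "\<phi> z * cnj (\<phi> z) = cmod (\<phi> z) * cmod (\<phi> z)"
    by (metis complex_norm_square of_real_mult power2_eq_square)
  then have "c * \<phi> z = \<i> * complex_of_real (\<sigma> * cmod (\<phi> z))"
    using False by (simp add: c_def complex_norm_square field_simps)
  then have Im: "Im (\<omega> z) * Im (c * \<phi> z) = \<bar>Im (\<omega> z)\<bar> * cmod (\<phi> z)"
    by (simp add: \<sigma>_def)
  have norm: "cmod (c * \<phi> z) = cmod (\<phi> z)" using c1 by (simp add: norm_mult)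
  \<comment> \<open>\<open>c\<close> rotates \<open>\<phi> z\<close> onto the imaginary axis, on the side where \<open>Im (\<omega> z)\<close> lies\<close>
  have "T_op (ell \<circ> \<omega>) \<phi> (\<lambda>w. ell (c * w)) \<in> class_P"
    using T ell_rotation_in_class_P[OF c1] by blast
  then have "Re (ell (\<omega> z) * ell (c * \<phi> z)) > 0"
    using z unfolding class_P_def T_op_def by auto
  moreover have "\<omega> z \<noteq> 1" "c * \<phi> z \<noteq> 1" using a p norm by auto
  ultimately have "0 < ((1 - (cmod (\<omega> z))^2) * (1 - (cmod (c * \<phi> z))^2)
      - 4 * Im (\<omega> z) * Im (c * \<phi> z)) / ((cmod (1 - \<omega> z))^2 * (cmod (1 - c * \<phi> z))^2)"
    by (simp only: Re_ell_mult[OF \<open>\<omega> z \<noteq> 1\<close> \<open>c * \<phi> z \<noteq> 1\<close>])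
  then have "0 < (1 - (cmod (\<omega> z))^2) * (1 - (cmod (c * \<phi> z))^2)
      - 4 * Im (\<omega> z) * Im (c * \<phi> z)"
    by (smt (verit) divide_nonpos_nonneg zero_le_mult_iff zero_le_power2)
  then show ?thesis using Im norm by simp
qed

text \<open>For \<open>e = \<plusminus>1\<close> this is the segment ending at \<open>\<zeta>\<close> at an angle of \<open>45\<degree>\<close> to the radius.\<close>

definition oblique_path :: "complex \<Rightarrow> real \<Rightarrow> real \<Rightarrow> complex" where
  "oblique_path \<zeta> e s = \<zeta> * (1 - complex_of_real s * Complex 1 e)"

lemma oblique_path_eq_translation:
  "oblique_path \<zeta> e = (\<lambda>s. \<zeta> + s *\<^sub>R (- \<zeta> * Complex 1 e))"
  by (auto simp: oblique_path_def scaleR_conv_of_real algebra_simps)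

lemma closed_segment_oblique_path:
  assumes "a \<le> b"
  shows "closed_segment (oblique_path \<zeta> e a) (oblique_path \<zeta> e b) = oblique_path \<zeta> e ` {a..b}"
proof -
  define v where "v = - \<zeta> * Complex 1 e"
  have "closed_segment (a *\<^sub>R v) (b *\<^sub>R v) = (\<lambda>s. s *\<^sub>R v) ` {a..b}"
    using closed_segment_linear_image[of "\<lambda>s. s *\<^sub>R v" a b]
      closed_segment_eq_real_ivl1[OF assms] by simp
  then have "closed_segment (\<zeta> + a *\<^sub>R v) (\<zeta> + b *\<^sub>R v) = (\<lambda>x. \<zeta> + x) ` (\<lambda>s. s *\<^sub>R v) ` {a..b}"
    by (metis closed_segment_translation)
  then show ?thesis unfolding oblique_path_eq_translation v_def image_image .
qed

lemma norm_diff_oblique_path: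
  assumes "cmod \<zeta> = 1" "\<bar>e\<bar> = 1"
  shows "cmod (\<zeta> - oblique_path \<zeta> e s) = \<bar>s\<bar> * sqrt 2"
proof -
  have "e^2 = 1" using assms(2) by (simp add: abs_square_eq_1)
  moreover have "\<zeta> - oblique_path \<zeta> e s = \<zeta> * complex_of_real s * Complex 1 e"
    by (simp add: oblique_path_def algebra_simps)
  ultimately show ?thesis using assms(1) by (simp add: norm_mult complex_norm)
qed

lemma norm_oblique_path_le:
  assumes "cmod \<zeta> = 1" "\<bar>e\<bar> = 1"
  shows "cmod (oblique_path \<zeta> e s) \<le> 1 - s + s^2"
proof -
  have "e^2 = 1" using assms(2) by (simp add: abs_square_eq_1)
  moreover have "1 - complex_of_real s * Complex 1 e = Complex (1 - s) (- s * e)"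
    by (simp add: complex_eq_iff)
  ultimately have "cmod (oblique_path \<zeta> e s) = sqrt ((1 - s)^2 + s^2)"
    using assms(1) by (simp add: oblique_path_def norm_mult complex_norm power_mult_distrib)
  also have "\<dots> \<le> 1 - s + s^2"
  proof (rule real_le_lsqrt)
    show "0 \<le> 1 - s + s^2"
      using zero_le_power2[of "s - 1/2"] by (simp add: power2_eq_square algebra_simps)
    show "(1 - s)^2 + s^2 \<le> (1 - s + s^2)^2"
      using zero_le_power2[of "s * (1 - s)"] by (simp add: power2_eq_square algebra_simps)
  qed
  finally show ?thesis .
qed

lemma oblique_path_in_stolz_angle:
  assumes "cmod \<zeta> = 1" "\<bar>e\<bar> = 1" "0 < s" "s < 1/4"
  shows "oblique_path \<zeta> e s \<in> stolz_angle \<zeta> 3"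
proof -
  have "cmod (\<zeta> - oblique_path \<zeta> e s) < 2 * s"
    using norm_diff_oblique_path[OF assms(1,2)] sqrt2_less_2 assms(3) by simp
  also have "\<dots> \<le> 3 * (s - s^2)" using assms(3,4) by (simp add: power2_eq_square)
  also have "\<dots> \<le> 3 * (1 - cmod (oblique_path \<zeta> e s))"
    using norm_oblique_path_le[OF assms(1,2), of s] by (simp add: algebra_simps)
  finally have "cmod (\<zeta> - oblique_path \<zeta> e s) < 3 * (1 - cmod (oblique_path \<zeta> e s))" .
  moreover from this have "cmod (oblique_path \<zeta> e s) < 1"
    by (smt (verit) norm_ge_zero)
  ultimately show ?thesis by (simp add: stolz_angle_def unit_disk_def)
qed

lemma Moebius_function_radial_oblique_path_le:
  assumes z1: "cmod \<zeta> = 1" and e: "\<bar>e\<bar> = 1" and s: "0 < s" "s \<le> 1/4"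
  shows "cmod (Moebius_function 0 (complex_of_real (1 - s) * \<zeta>) (oblique_path \<zeta> e s)) \<le> 4/7"
proof -
  define w where "w = complex_of_real (1 - s) * \<zeta>"
  define P where "P = oblique_path \<zeta> e s"
  have "cnj \<zeta> * \<zeta> = 1"
    using z1 complex_norm_square[of \<zeta>] by (simp add: mult.commute)
  moreover have "cnj w * P = complex_of_real (1 - s) * (cnj \<zeta> * \<zeta>) * (1 - complex_of_real s * Complex 1 e)"
    by (simp add: w_def P_def oblique_path_def)
  ultimately have "cnj w * P = complex_of_real (1 - s) * (1 - complex_of_real s * Complex 1 e)"
    by simp
  then have den_eq: "1 - cnj w * P = complex_of_real s * Complex (2 - s) (e * (1 - s))"
    by (simp add: complex_eq_iff algebra_simps)
  have "s * s \<le> s * (1/4)" using s by (intro mult_left_mono) auto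
  then have "7/4 * s \<le> s * (2 - s)" by (simp add: algebra_simps)
  also have "\<dots> \<le> s * cmod (Complex (2 - s) (e * (1 - s)))"
    using s abs_Re_le_cmod[of "Complex (2 - s) (e * (1 - s))"] by (intro mult_left_mono) auto
  also have "\<dots> = cmod (1 - cnj w * P)"
    using s den_eq by (simp add: norm_mult)
  finally have den: "7/4 * s \<le> cmod (1 - cnj w * P)" .
  have "P - w = \<zeta> * complex_of_real s * (- \<i> * complex_of_real e)"
    by (simp add: w_def P_def oblique_path_def complex_eq_iff algebra_simps)
  then have num: "cmod (P - w) = s"
    using z1 e s by (simp add: norm_mult)
  have "cmod (Moebius_function 0 w P) = s / cmod (1 - cnj w * P)"
    by (simp add: Moebius_function_simple norm_divide num)
  also have "\<dots> \<le> s / (7/4 * s)"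
    using den s by (intro divide_left_mono) (auto intro!: mult_pos_pos)
  finally show ?thesis using s by (simp add: w_def P_def)
qed

lemma eventually_at_right_0_less_quarter:
  "eventually (\<lambda>s. 0 < s \<and> s < (1/4::real)) (at_right 0)"
  unfolding eventually_at_right_field by (intro exI[of _ "1/4"]) auto

lemma tendsto_oblique_path: "(oblique_path \<zeta> e \<longlongrightarrow> \<zeta>) (at_right 0)"
proof -
  have "(oblique_path \<zeta> e \<longlongrightarrow> \<zeta> * (1 - complex_of_real 0 * Complex 1 e)) (at_right 0)"
    unfolding oblique_path_def by (intro tendsto_intros)
  then show ?thesis by simp
qed

lemma filterlim_oblique_path_stolz_angle:
  assumes "cmod \<zeta> = 1" "\<bar>e\<bar> = 1"
  shows "filterlim (oblique_path \<zeta> e) (at \<zeta> within stolz_angle \<zeta> 3) (at_right 0)"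
  unfolding filterlim_at
proof
  show "\<forall>\<^sub>F s in at_right 0. oblique_path \<zeta> e s \<in> stolz_angle \<zeta> 3 \<and> oblique_path \<zeta> e s \<noteq> \<zeta>"
    using eventually_at_right_0_less_quarter
  proof eventually_elim
    case (elim s)
    have "cmod (\<zeta> - oblique_path \<zeta> e s) \<noteq> 0"
      using norm_diff_oblique_path[OF assms, of s] elim by simp
    then show ?case using oblique_path_in_stolz_angle[OF assms] elim by auto
  qed
qed (rule tendsto_oblique_path)

lemma nontangential_limit_along_oblique_path:
  assumes "nontangential_limit f \<zeta> L" "cmod \<zeta> = 1" "\<bar>e\<bar> = 1"
  shows "((\<lambda>s. f (oblique_path \<zeta> e s)) \<longlongrightarrow> L) (at_right 0)"
proof -
  have "(f \<longlongrightarrow> L) (at \<zeta> within stolz_angle \<zeta> 3)"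
    using assms(1) unfolding nontangential_limit_def by simp
  then show ?thesis using filterlim_oblique_path_stolz_angle[OF assms(2,3)] by (rule filterlim_compose)
qed

lemma radial_limit_imp_tendsto_at_right_0:
  assumes "radial_limit f \<zeta> L"
  shows "((\<lambda>s. f (complex_of_real (1 - s) * \<zeta>)) \<longlongrightarrow> L) (at_right 0)"
proof -
  have "filterlim (\<lambda>s::real. 1 - s) (at_left 1) (at_right 0)"
    unfolding filterlim_at
  proof
    show "\<forall>\<^sub>F s in at_right 0. 1 - s \<in> {..<1::real} \<and> 1 - s \<noteq> 1"
      unfolding eventually_at_right_field by (intro exI[of _ 1]) auto
    have "((\<lambda>s::real. 1 - s) \<longlongrightarrow> 1 - 0) (at_right 0)" by (intro tendsto_intros)
    then show "((\<lambda>s::real. 1 - s) \<longlongrightarrow> 1) (at_right 0)" by simp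
  qed
  then show ?thesis
    using assms unfolding radial_limit_def by (rule filterlim_compose[rotated])
qed

lemma holomorphic_linear_approx_on_segment:
  assumes hol: "f holomorphic_on S" and S: "open S" "closed_segment a b \<subseteq> S"
    and bound: "\<And>z. z \<in> closed_segment a b \<Longrightarrow> cmod (deriv f z - D) \<le> B"
  shows "cmod ((f b - D * b) - (f a - D * a)) \<le> B * cmod (b - a)"
proof (rule field_differentiable_bound[OF convex_closed_segment _ bound])
  fix z assume z: "z \<in> closed_segment a b"
  have "(f has_field_derivative deriv f z) (at z within closed_segment a b)"
    using S z by (intro holomorphic_derivI[OF hol S(1)]) auto
  then show "((\<lambda>z. f z - D * z) has_field_derivative deriv f z - D) (at z within closed_segment a b)"
    by (rule DERIV_diff[OF _ DERIV_cmult_Id])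
qed auto

lemma angular_derivative_expansion_oblique_path:
  assumes hol: "\<omega> holomorphic_on unit_disk" and z1: "cmod \<zeta> = 1" and e: "\<bar>e\<bar> = 1"
    and lim: "nontangential_limit \<omega> \<zeta> \<eta>" and dlim: "nontangential_limit (deriv \<omega>) \<zeta> D"
    and eps: "\<epsilon> > 0"
  shows "eventually (\<lambda>s. cmod (\<omega> (oblique_path \<zeta> e s) - \<eta> + D * \<zeta> * Complex 1 e * complex_of_real s)
           \<le> \<epsilon> * s) (at_right 0)"
proof -
  define P where "P = oblique_path \<zeta> e"
  define h where "h z = \<omega> z - D * z" for z
  have "((\<lambda>t. deriv \<omega> (P t)) \<longlongrightarrow> D) (at_right 0)"
    unfolding P_def by (rule nontangential_limit_along_oblique_path[OF dlim z1 e])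
  then have "eventually (\<lambda>t. dist (deriv \<omega> (P t)) D < \<epsilon>/2) (at_right 0)"
    using eps by (intro tendstoD) auto
  then have "eventually (\<lambda>t. t < 1/4 \<and> cmod (deriv \<omega> (P t) - D) \<le> \<epsilon>/2) (at_right 0)"
    using eventually_at_right_0_less_quarter by eventually_elim (auto simp: dist_norm)
  then obtain b :: real where b: "b > 0"
    and good: "\<And>t. 0 < t \<Longrightarrow> t < b \<Longrightarrow> t < 1/4 \<and> cmod (deriv \<omega> (P t) - D) \<le> \<epsilon>/2"
    unfolding eventually_at_right_field by auto
  have increment: "cmod (h (P s) - h (P s')) \<le> \<epsilon>/2 * cmod (P s - P s')"
    if s': "0 < s'" "s' \<le> s" and s: "s < b" for s s'
  proof -
    have pts: "P t \<in> unit_disk" "cmod (deriv \<omega> (P t) - D) \<le> \<epsilon>/2" if "t \<in> {s'..s}" for t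
      using that s' s good[of t] oblique_path_in_stolz_angle[OF z1 e, of t]
      by (auto simp: P_def stolz_angle_def)
    have seg: "closed_segment (P s') (P s) = P ` {s'..s}"
      unfolding P_def by (rule closed_segment_oblique_path[OF s'(2)])
    have "open unit_disk" by (simp add: unit_disk_def)
    then show ?thesis
      unfolding h_def using pts seg
      by (intro holomorphic_linear_approx_on_segment[OF hol]) auto
  qed
  have "cmod (\<omega> (P s) - \<eta> + D * \<zeta> * Complex 1 e * complex_of_real s) \<le> \<epsilon> * s"
    if s: "0 < s" "s < b" for s
  proof -
    have "((\<lambda>s'. h (P s')) \<longlongrightarrow> \<eta> - D * \<zeta>) (at_right 0)"
      unfolding h_def P_def
      by (intro tendsto_intros nontangential_limit_along_oblique_path[OF lim z1 e] tendsto_oblique_path)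
    then have lower: "((\<lambda>s'. cmod (h (P s) - h (P s'))) \<longlongrightarrow> cmod (h (P s) - (\<eta> - D * \<zeta>))) (at_right 0)"
      by (intro tendsto_intros)
    have upper: "((\<lambda>s'. \<epsilon>/2 * cmod (P s - P s')) \<longlongrightarrow> \<epsilon>/2 * cmod (P s - \<zeta>)) (at_right 0)"
      unfolding P_def by (intro tendsto_intros tendsto_oblique_path)
    have "eventually (\<lambda>s'. cmod (h (P s) - h (P s')) \<le> \<epsilon>/2 * cmod (P s - P s')) (at_right 0)"
      unfolding eventually_at_right_field using s increment by (intro exI[of _ s]) auto
    then have "cmod (h (P s) - (\<eta> - D * \<zeta>)) \<le> \<epsilon>/2 * cmod (P s - \<zeta>)"
      by (intro tendsto_le[OF _ upper lower]) simp_all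
    also have "\<dots> = \<epsilon>/2 * (s * sqrt 2)"
      using norm_diff_oblique_path[OF z1 e, of s] s by (simp add: P_def norm_minus_commute)
    also have "\<dots> \<le> \<epsilon> * s"
      using sqrt2_less_2 eps s by simp
    finally show ?thesis
      by (simp add: h_def P_def oblique_path_def algebra_simps)
  qed
  then show ?thesis
    unfolding eventually_at_right_field P_def using b by blast
qed

lemma exists_diagonal_direction:
  assumes "a \<noteq> 0"
  shows "\<exists>e. \<bar>e\<bar> = 1 \<and> 2 * Re (a * Complex 1 e) < 4 * \<bar>Im (a * Complex 1 e)\<bar>"
proof (rule ccontr)
  assume "\<not> ?thesis"
  then have "\<not> 2 * Re (a * Complex 1 1) < 4 * \<bar>Im (a * Complex 1 1)\<bar>"
    and "\<not> 2 * Re (a * Complex 1 (-1)) < 4 * \<bar>Im (a * Complex 1 (-1))\<bar>"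
    by (metis abs_1 abs_minus_cancel)+
  then have "Re a - Im a \<ge> 2 * \<bar>Re a + Im a\<bar>" "Re a + Im a \<ge> 2 * \<bar>Im a - Re a\<bar>"
    by simp_all
  then have "Re a = 0 \<and> Im a = 0"
    using abs_ge_self[of "Re a + Im a"] abs_ge_minus_self[of "Re a + Im a"]
      abs_ge_self[of "Im a - Re a"] abs_ge_minus_self[of "Im a - Re a"]
    by (intro conjI order.antisym; linarith)
  then show False using assms by (simp add: complex_eq_iff)
qed

lemma one_minus_norm_square_le_Im_near_real_unit:
  fixes W \<eta> b :: complex and s :: real
  assumes \<eta>: "\<eta> = 1 \<or> \<eta> = -1" and s: "0 < s"
    and close: "6 * cmod (W - \<eta> + b * s) \<le> (4 * \<bar>Im (b * \<eta>)\<bar> - 2 * Re (b * \<eta>)) * s"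
  shows "1 - (cmod W)^2 \<le> 4 * \<bar>Im W\<bar>"
proof -
  define E where "E = W - \<eta> + b * s"
  define X where "X = W * \<eta> - 1"
  define a where "a = b * \<eta>"
  define F where "F = E * \<eta>"
  have "\<eta> * \<eta> = 1" using \<eta> by auto
  then have X: "X = - (a * s) + F"
    by (simp add: X_def E_def a_def F_def algebra_simps)
  have "cmod F = cmod E" "cmod (W * \<eta>) = cmod W" "\<bar>Im (W * \<eta>)\<bar> = \<bar>Im W\<bar>"
    using \<eta> by (auto simp: F_def norm_mult)
  then have nF: "\<bar>Re F\<bar> \<le> cmod E" "\<bar>Im F\<bar> \<le> cmod E"
    and nW: "(cmod W)^2 = (1 + Re X)^2 + (Im X)^2" and iW: "\<bar>Im W\<bar> = \<bar>Im X\<bar>"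
    using abs_Re_le_cmod[of F] abs_Im_le_cmod[of F] cmod_power2[of "1 + X"]
    by (auto simp: X_def)
  have "1 - (cmod W)^2 \<le> - 2 * Re X"
    unfolding nW by (simp add: power2_eq_square algebra_simps)
  also have "\<dots> \<le> 2 * s * Re a + 2 * cmod E"
    using nF by (simp add: X)
  finally have A: "1 - (cmod W)^2 \<le> 2 * s * Re a + 2 * cmod E" .
  have "\<bar>Im a * s\<bar> = s * \<bar>Im a\<bar>" using s by (simp add: abs_mult)
  then have "s * \<bar>Im a\<bar> - cmod E \<le> \<bar>Im W\<bar>"
    unfolding iW X
    using nF abs_triangle_ineq2[of "Im a * s" "Im F"] abs_minus_commute[of "Im F" "Im a * s"]
    by simp
  then show ?thesis
    using A close s by (simp add: E_def a_def algebra_simps)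
qed

lemma angular_derivative_oblique_path_estimate:
  assumes hol: "\<omega> holomorphic_on unit_disk" and z1: "cmod \<zeta> = 1"
    and \<eta>: "cmod \<eta> = 1" and lim: "nontangential_limit \<omega> \<zeta> \<eta>"
    and dlim: "nontangential_limit (deriv \<omega>) \<zeta> D" and D: "D \<noteq> 0"
  obtains e where "\<bar>e\<bar> = 1"
    and "eventually (\<lambda>s. 1 - (cmod (\<omega> (oblique_path \<zeta> e s)))^2
           \<le> 4 * \<bar>Im (\<omega> (oblique_path \<zeta> e s))\<bar>) (at_right 0)"
proof (cases "Im \<eta> = 0")
  case False
  have "((\<lambda>s. \<omega> (oblique_path \<zeta> 1 s)) \<longlongrightarrow> \<eta>) (at_right 0)"
    using nontangential_limit_along_oblique_path[OF lim z1] by simp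
  then have l1: "((\<lambda>s. 1 - (cmod (\<omega> (oblique_path \<zeta> 1 s)))^2) \<longlongrightarrow> 1 - (cmod \<eta>)^2) (at_right 0)"
    and l2: "((\<lambda>s. \<bar>Im (\<omega> (oblique_path \<zeta> 1 s))\<bar>) \<longlongrightarrow> \<bar>Im \<eta>\<bar>) (at_right 0)"
    by (auto intro!: tendsto_intros)
  have "1 - (cmod \<eta>)^2 < \<bar>Im \<eta>\<bar>" "\<bar>Im \<eta>\<bar> / 2 < \<bar>Im \<eta>\<bar>" using False \<eta> by auto
  from order_tendstoD(2)[OF l1 this(1)] order_tendstoD(1)[OF l2 this(2)]
  have "eventually (\<lambda>s. 1 - (cmod (\<omega> (oblique_path \<zeta> 1 s)))^2
      \<le> 4 * \<bar>Im (\<omega> (oblique_path \<zeta> 1 s))\<bar>) (at_right 0)"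
    by eventually_elim linarith
  then show ?thesis using that[of 1] by simp
next
  case True
  then have real: "\<eta> = complex_of_real (Re \<eta>)" by (simp add: complex_eq_iff)
  then have "\<bar>Re \<eta>\<bar> = 1" using \<eta> by (metis norm_of_real)
  then have \<eta>1: "\<eta> = 1 \<or> \<eta> = -1"
    using real by (cases "Re \<eta> \<ge> 0") auto
  \<comment> \<open>\<open>\<omega> (oblique_path \<zeta> e s) = \<eta> - D \<zeta> (1 + i e) s + o(s)\<close>; choose \<open>e\<close> so that the
    tangential part of the displacement dominates the radial one\<close>
  have "D * \<zeta> * \<eta> \<noteq> 0" using D z1 \<eta> by auto
  then obtain e where e: "\<bar>e\<bar> = 1"
    and dir: "2 * Re (D * \<zeta> * \<eta> * Complex 1 e) < 4 * \<bar>Im (D * \<zeta> * \<eta> * Complex 1 e)\<bar>"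
    using exists_diagonal_direction by blast
  define b where "b = D * \<zeta> * Complex 1 e"
  define \<delta> where "\<delta> = 4 * \<bar>Im (b * \<eta>)\<bar> - 2 * Re (b * \<eta>)"
  have b\<eta>: "b * \<eta> = D * \<zeta> * \<eta> * Complex 1 e" by (simp add: b_def mult_ac)
  have "\<delta> > 0" unfolding \<delta>_def b\<eta> using dir by linarith
  then have "eventually (\<lambda>s. cmod (\<omega> (oblique_path \<zeta> e s) - \<eta> + b * complex_of_real s) \<le> \<delta> / 6 * s)
      (at_right 0)"
    unfolding b_def
    by (intro angular_derivative_expansion_oblique_path[OF hol z1 e lim dlim]) simp
  then have "eventually (\<lambda>s. 1 - (cmod (\<omega> (oblique_path \<zeta> e s)))^2
      \<le> 4 * \<bar>Im (\<omega> (oblique_path \<zeta> e s))\<bar>) (at_right 0)"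
    using eventually_at_right_0_less_quarter
  proof eventually_elim
    case (elim s)
    then show ?case
      by (intro one_minus_norm_square_le_Im_near_real_unit[OF \<eta>1, of s _ b]) (auto simp: \<delta>_def)
  qed
  then show ?thesis using that e by blast
qed

lemma norm_le_two_thirds_if_class_P_preserving:
  assumes T: "\<forall>f\<in>class_P. T_op (ell \<circ> \<omega>) \<phi> f \<in> class_P"
    and z: "z \<in> unit_disk" and p: "cmod (\<phi> z) < 1" and a: "cmod (\<omega> z) < 1"
    and near: "1 - (cmod (\<omega> z))^2 \<le> 4 * \<bar>Im (\<omega> z)\<bar>"
  shows "cmod (\<phi> z) \<le> 2/3"
proof (rule ccontr)
  assume "\<not> ?thesis"
  then have big: "2/3 < cmod (\<phi> z)" by simp
  have pos: "0 < 1 - (cmod (\<omega> z))^2" using a by (simp add: abs_square_less_1)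
  have "(1 - (cmod (\<omega> z))^2) * cmod (\<phi> z) \<le> 4 * \<bar>Im (\<omega> z)\<bar> * cmod (\<phi> z)"
    using near by (intro mult_right_mono) auto
  also have "\<dots> \<le> (1 - (cmod (\<omega> z))^2) * (1 - (cmod (\<phi> z))^2)"
    by (rule class_P_preserving_imp_Im_bound[OF T z p a])
  finally have "cmod (\<phi> z) \<le> 1 - (cmod (\<phi> z))^2" using pos by simp
  moreover have "2/3 * (2/3) < cmod (\<phi> z) * cmod (\<phi> z)"
    using big by (intro mult_strict_mono) auto
  ultimately show False using big by (simp add: power2_eq_square)
qed

lemma radial_norm_bound_if_oblique_bound:
  assumes hol: "\<phi> holomorphic_on ball 0 1" and img: "\<phi> ` ball 0 1 \<subseteq> ball 0 1"
    and z1: "cmod \<zeta> = 1" and e: "\<bar>e\<bar> = 1" and s: "0 < s" "s < 1/4"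
    and small: "cmod (\<phi> (oblique_path \<zeta> e s)) \<le> 2/3"
  shows "(cmod (\<phi> (complex_of_real (1 - s) * \<zeta>)))^2 \<le> 136/147"
    \<comment> \<open>\<open>136/147 = 1 - (1 - (4/7)\<^sup>2) (1 - 2/3)\<^sup>2\<close>\<close>
proof -
  define P where "P = oblique_path \<zeta> e s"
  define R where "R = complex_of_real (1 - s) * \<zeta>"
  have P: "cmod P < 1"
    using oblique_path_in_stolz_angle[OF z1 e s] by (simp add: P_def stolz_angle_def unit_disk_def)
  have R: "cmod R < 1"
    unfolding R_def norm_mult norm_of_real using z1 s by simp
  have "cmod (Moebius_function 0 (\<phi> R) (\<phi> P)) \<le> cmod (Moebius_function 0 R P)"
    by (rule Schwarz_Pick_Moebius_function[OF hol img P R])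
  also have "\<dots> \<le> 4/7"
    unfolding P_def R_def using Moebius_function_radial_oblique_path_le[OF z1 e] s by simp
  finally have "cmod (Moebius_function 0 (\<phi> R) (\<phi> P)) \<le> 4/7" .
  moreover have "cmod (\<phi> R) < 1" using img R by (auto simp: image_subset_iff)
  ultimately have "(1 - (4/7)^2) * (1 - 2/3)^2 \<le> 1 - (cmod (\<phi> R))^2"
    using small by (intro Moebius_function_le_imp_norm_bound) (auto simp: P_def)
  then show ?thesis by (simp add: R_def power2_eq_square)
qed

lemma radial_norm_bound_if_class_P_preserving:
  assumes \<phi>: "schwarz_type \<phi>" and \<omega>: "schwarz_type \<omega>"
    and T: "\<forall>f\<in>class_P. T_op (ell \<circ> \<omega>) \<phi> f \<in> class_P"
    and z1: "cmod \<zeta> = 1" and e: "\<bar>e\<bar> = 1" and s: "0 < s" "s < 1/4"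
    and near: "1 - (cmod (\<omega> (oblique_path \<zeta> e s)))^2 \<le> 4 * \<bar>Im (\<omega> (oblique_path \<zeta> e s))\<bar>"
  shows "(cmod (\<phi> (complex_of_real (1 - s) * \<zeta>)))^2 \<le> 136/147"
proof -
  have hol: "\<phi> holomorphic_on ball 0 1" and img: "\<phi> ` ball 0 1 \<subseteq> ball 0 1"
    and img\<omega>: "\<omega> ` ball 0 1 \<subseteq> ball 0 1"
    using \<phi> \<omega> by (simp_all add: schwarz_type_def unit_disk_def)
  have "oblique_path \<zeta> e s \<in> unit_disk"
    using oblique_path_in_stolz_angle[OF z1 e s] by (auto simp: stolz_angle_def)
  then have "cmod (\<phi> (oblique_path \<zeta> e s)) \<le> 2/3"
    using near img img\<omega> by (intro norm_le_two_thirds_if_class_P_preserving[OF T])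
      (auto simp: unit_disk_def image_subset_iff)
  then show ?thesis by (rule radial_norm_bound_if_oblique_bound[OF hol img z1 e s])
qed

theorem theorem3p8:
  fixes \<phi> \<omega> :: "complex \<Rightarrow> complex" and \<zeta> :: complex
  assumes "schwarz_type \<phi>" and "schwarz_type \<omega>"
    and "cmod \<zeta> = 1"
    and "\<exists>\<eta>. cmod \<eta> = 1 \<and> radial_limit \<phi> \<zeta> \<eta>"
    and "\<forall>f\<in>class_P. T_op (ell \<circ> \<omega>) \<phi> f \<in> class_P"
  shows "\<not> (\<exists>D. D \<noteq> 0 \<and> has_angular_derivative \<omega> \<zeta> D)"
proof
  assume "\<exists>D. D \<noteq> 0 \<and> has_angular_derivative \<omega> \<zeta> D"
  then obtain D \<eta> where D: "D \<noteq> 0" and \<eta>: "cmod \<eta> = 1" "nontangential_limit \<omega> \<zeta> \<eta>"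
    and dlim: "nontangential_limit (deriv \<omega>) \<zeta> D"
    unfolding has_angular_derivative_def by blast
  have "\<omega> holomorphic_on unit_disk" using assms(2) by (simp add: schwarz_type_def)
  then obtain e where e: "\<bar>e\<bar> = 1" and near: "eventually (\<lambda>s. 1 - (cmod (\<omega> (oblique_path \<zeta> e s)))^2
      \<le> 4 * \<bar>Im (\<omega> (oblique_path \<zeta> e s))\<bar>) (at_right 0)"
    using angular_derivative_oblique_path_estimate[OF _ assms(3) \<eta> dlim D] by blast
  obtain \<eta>' where "cmod \<eta>' = 1" "radial_limit \<phi> \<zeta> \<eta>'" using assms(4) by blast
  then have "((\<lambda>s. (cmod (\<phi> (complex_of_real (1 - s) * \<zeta>)))^2) \<longlongrightarrow> 1) (at_right 0)"
    using tendsto_power[OF tendsto_norm[OF radial_limit_imp_tendsto_at_right_0], of _ _ _ 2]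
    by (metis one_power2)
  then have "eventually (\<lambda>s. 136/147 < (cmod (\<phi> (complex_of_real (1 - s) * \<zeta>)))^2) (at_right 0)"
    by (rule order_tendstoD) simp
  then have "eventually (\<lambda>s::real. False) (at_right 0)"
    using near eventually_at_right_0_less_quarter
    by eventually_elim
      (use radial_norm_bound_if_class_P_preserving[OF assms(1,2,5,3) e] in fastforce)
  then show False by simp
qed

end
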